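(* Let $n\ge3$ and let $\mathcal{M}\subseteq\{1,\dots,n\}$ be a sample set that is a union of twin samples (pairs $\{i,i+1\}$) and contains $1$ and $n$. Let $A=\mathbf{I}_{\mathcal{M}}$, $y\in\mathbb{R}^{|\mathcal{M}|}$, and let $z\in\mathbb{R}^n$ satisfy $Az=y$. Then $z$ is optimal for $\min_{z'\in\mathbb{R}^n}\|Dz'\|_1$ subject to $Az'=y$ if and only if $z$ is sign consistent (with respect to $\mathcal{M}$).
   Context: $D\in\mathbb{R}^{(n-2)\times n}$ is the second-order difference operator, $(Dz)_k=z_k-2z_{k+1}+z_{k+2}$. $\mathbf{I}_{\mathcal{M}}$ consists of the rows of the identity indexed by $\mathcal{M}$, so $Az=z_{\mathcal{M}}$. A twin sample is a pair of consecutive indices $(i,i+1)$, $i\in\{1,\dots,n-1\}$. For $k\in\{2,\dots,n-1\}$ let $s_k=\mathrm{sign}(z_{k-1}-2z_k+z_{k+1})$ (with $\mathrm{sign}(0)=0$). A profile $z$ is sign consistent (with respect to $\mathcal{M}$) if for any two consecutive samples $i<j$ in $\mathcal{M}$ (no element of $\mathcal{M}$ strictly between them) one of the following holds: (i) no sign change: for all $k,h$ with $i\le k,h\le j$ (for which $s_k,s_h$ are defined), if $s_k\ne0$ and $s_h\ne0$ then $s_k=s_h$; (ii) sign change only at the boundary: $s_k=0$ for every $k$ with $i<k<j$. *)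

theory Defs
  imports Complex_Main
begin

text \<open>Vectors in R^n are represented as functions nat => real, using indices 1..n
  (values outside 1..n are irrelevant).\<close>

definition diff2 :: "(nat \<Rightarrow> real) \<Rightarrow> nat \<Rightarrow> real" where
  "diff2 z k = z k - 2 * z (k+1) + z (k+2)"

definition l1_D :: "nat \<Rightarrow> (nat \<Rightarrow> real) \<Rightarrow> real" where
  "l1_D n z = (\<Sum>k=1..n-2. \<bar>diff2 z k\<bar>)"

text \<open>A z = z restricted to M (A = I_M); A z = y with y indexed by the elements of M.\<close>
definition sample_eq :: "nat set \<Rightarrow> (nat \<Rightarrow> real) \<Rightarrow> (nat \<Rightarrow> real) \<Rightarrow> bool" where
  "sample_eq M z y \<longleftrightarrow> (\<forall>i\<in>M. z i = y i)"

definition is_optimal :: "nat \<Rightarrow> nat set \<Rightarrow> (nat \<Rightarrow> real) \<Rightarrow> (nat \<Rightarrow> real) \<Rightarrow> bool" where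
  "is_optimal n M y z \<longleftrightarrow> sample_eq M z y \<and>
     (\<forall>z'. sample_eq M z' y \<longrightarrow> l1_D n z \<le> l1_D n z')"

definition sgn_curv :: "(nat \<Rightarrow> real) \<Rightarrow> nat \<Rightarrow> real" where
  "sgn_curv z k = sgn (z (k-1) - 2 * z k + z (k+1))"

definition twin_union :: "nat \<Rightarrow> nat set \<Rightarrow> bool" where
  "twin_union n M \<longleftrightarrow> (\<exists>T \<subseteq> {1..n-1}. M = (\<Union>i\<in>T. {i, i+1}))"

definition consecutive_samples :: "nat set \<Rightarrow> nat \<Rightarrow> nat \<Rightarrow> bool" where
  "consecutive_samples M i j \<longleftrightarrow> i \<in> M \<and> j \<in> M \<and> i < j \<and> (\<forall>m\<in>M. \<not> (i < m \<and> m < j))"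

definition sign_consistent :: "nat \<Rightarrow> nat set \<Rightarrow> (nat \<Rightarrow> real) \<Rightarrow> bool" where
  "sign_consistent n M z \<longleftrightarrow>
     (\<forall>i j. consecutive_samples M i j \<longrightarrow>
        ((\<forall>k h. i \<le> k \<and> k \<le> j \<and> i \<le> h \<and> h \<le> j \<and>
                 2 \<le> k \<and> k \<le> n-1 \<and> 2 \<le> h \<and> h \<le> n-1 \<and>
                 sgn_curv z k \<noteq> 0 \<and> sgn_curv z h \<noteq> 0 \<longrightarrow> sgn_curv z k = sgn_curv z h)
         \<or> (\<forall>k. i < k \<and> k < j \<longrightarrow> sgn_curv z k = 0)))"

end

theory Submission
  imports Defs
begin

text \<open>
  Call consecutive samples i < j with j \<ge> i + 2 a long gap and {i..j} its window. Twin sampling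
  puts both neighbours of every point outside the windows into M, so the curvatures there are fixed
  by the data, and distinct windows are disjoint. On a window the curvatures telescope to
  differences of slopes: with outer slopes a = z(i) - z(i-1), b = z(j+1) - z(j) and chord slope
  \<mu> = (z(j) - z(i)) / (j - i), which is the mean of the inner slopes, the window cost
  \<Sum>k=i..j. |curv z k| is at least |\<mu> - a| + |b - \<mu>|, a quantity fixed by the samples, with equality
  exactly when the window is sign consistent. Hence the objective is a constant plus independent
  window costs, each minimal precisely for sign-consistent profiles, and replacing z on an
  inconsistent window by its chord strictly lowers the objective.
\<close>

lemma exists_neg_pos_of_sum_eq_0:
  fixes f :: "'a \<Rightarrow> real"
  assumes "finite S" "sum f S = 0" "x \<in> S" "f x \<noteq> 0"
  shows "(\<exists>p\<in>S. f p < 0) \<and> (\<exists>p\<in>S. 0 < f p)"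
proof (intro conjI; rule ccontr)
  assume "\<not> (\<exists>p\<in>S. f p < 0)"
  then show False using sum_nonneg_eq_0_iff[OF assms(1), of f] assms by fastforce
next
  assume "\<not> (\<exists>p\<in>S. 0 < f p)"
  then show False using sum_nonneg_eq_0_iff[OF assms(1), of "\<lambda>p. - f p"] assms
    by (fastforce simp: sum_negf)
qed

lemma abs_sum_less_sum_abs:
  fixes f :: "'a \<Rightarrow> real"
  assumes "finite S" "k \<in> S" "h \<in> S" "f k * f h < 0"
  shows "\<bar>sum f S\<bar> < (\<Sum>x\<in>S. \<bar>f x\<bar>)"
proof -
  obtain p q where pq: "p \<in> S" "q \<in> S" "f p > 0" "f q < 0"
    using assms by (auto simp: mult_less_0_iff)
  have "\<bar>f q\<bar> - f q \<le> (\<Sum>x\<in>S. \<bar>f x\<bar> - f x)" "\<bar>f p\<bar> + f p \<le> (\<Sum>x\<in>S. \<bar>f x\<bar> + f x)"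
    by (rule member_le_sum; use assms pq in auto)+
  then show ?thesis using pq by (auto simp: sum_subtractf sum.distrib)
qed

lemma nonneg_products_imp_same_sign:
  fixes f :: "'a \<Rightarrow> real"
  assumes "\<forall>k\<in>S. \<forall>h\<in>S. 0 \<le> f k * f h"
  shows "(\<forall>k\<in>S. 0 \<le> f k) \<or> (\<forall>k\<in>S. f k \<le> 0)"
  using assms by (meson mult_neg_pos not_le)

section \<open>Curvature and window costs\<close>

(* curv z k is the entry (D z)(k-1), centred at k like s_k. *)
definition curv :: "(nat \<Rightarrow> real) \<Rightarrow> nat \<Rightarrow> real" where
  "curv z k = z (k-1) - 2 * z k + z (k+1)"

definition slope :: "(nat \<Rightarrow> real) \<Rightarrow> nat \<Rightarrow> real" where
  "slope z p = z (p+1) - z p"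

definition chord_slope :: "(nat \<Rightarrow> real) \<Rightarrow> nat \<Rightarrow> nat \<Rightarrow> real" where
  "chord_slope z i j = (z j - z i) / (real j - real i)"

(* The cost of the window {i..j} after replacing z on it by its chord: only the two end
   curvatures remain. *)
definition chord_cost :: "(nat \<Rightarrow> real) \<Rightarrow> nat \<Rightarrow> nat \<Rightarrow> real" where
  "chord_cost z i j =
     \<bar>chord_slope z i j - slope z (i-1)\<bar> + \<bar>slope z j - chord_slope z i j\<bar>"

(* Absence of a sign change is encoded as nonnegativity of all pairwise products. *)
definition sign_consistent_on :: "(nat \<Rightarrow> real) \<Rightarrow> nat \<Rightarrow> nat \<Rightarrow> bool" where
  "sign_consistent_on z i j \<longleftrightarrow>
     (\<forall>k\<in>{i..j}. \<forall>h\<in>{i..j}. 0 \<le> curv z k * curv z h) \<or> (\<forall>k\<in>{i<..<j}. curv z k = 0)"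

definition chord_interp :: "(nat \<Rightarrow> real) \<Rightarrow> nat \<Rightarrow> nat \<Rightarrow> nat \<Rightarrow> real" where
  "chord_interp z i j l =
     (if i < l \<and> l < j then z i + (real l - real i) * chord_slope z i j else z l)"

lemma l1_D_eq_sum_curv: "l1_D n z = (\<Sum>k=2..n-1. \<bar>curv z k\<bar>)"
proof (cases "n \<ge> 2")
  case True
  then have "n - 1 = Suc (n - 2)" by simp
  then have shift: "{2..n-1} = {Suc 1..Suc (n-2)}" by simp
  show ?thesis unfolding l1_D_def shift sum.shift_bounds_cl_Suc_ivl
    by (simp add: diff2_def curv_def)
qed (simp add: l1_D_def)

lemma curv_eq_slope_diff: "1 \<le> k \<Longrightarrow> curv z k = slope z k - slope z (k-1)"
  by (simp add: curv_def slope_def)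

lemma sum_curv_telescope:
  assumes "1 \<le> i" "i \<le> p + 1"
  shows "(\<Sum>k=i..p. curv z k) = slope z p - slope z (i-1)"
  using assms
proof (induction p)
  case (Suc p)
  show ?case
  proof (cases "i \<le> p + 1")
    case True
    then have "{i..Suc p} = insert (Suc p) {i..p}" by auto
    then show ?thesis using Suc True by (simp add: curv_eq_slope_diff)
  next
    case False
    then have "i = p + 2" using Suc by simp
    then show ?thesis by simp
  qed
qed simp

lemma curv_uminus: "curv (\<lambda>k. - z k) k = - curv z k"
  by (simp add: curv_def)

lemma chord_cost_uminus: "chord_cost (\<lambda>k. - z k) i j = chord_cost z i j"
proof -
  have "chord_slope (\<lambda>k. - z k) i j = - chord_slope z i j"
    by (simp add: chord_slope_def diff_divide_distrib)
  moreover have "slope (\<lambda>k. - z k) p = - slope z p" for p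
    by (simp add: slope_def)
  ultimately show ?thesis by (simp add: chord_cost_def abs_minus_commute)
qed

lemma chord_cost_cong:
  assumes "1 \<le> i" "z (i-1) = z' (i-1)" "z i = z' i" "z j = z' j" "z (j+1) = z' (j+1)"
  shows "chord_cost z i j = chord_cost z' i j"
  using assms by (simp add: chord_cost_def chord_slope_def slope_def)

lemma sum_slope_minus_chord_slope:
  assumes "i < j"
  shows "(\<Sum>p=i..j-1. slope z p - chord_slope z i j) = 0"
proof -
  have "(\<Sum>p=i..j-1. slope z p) = z j - z i"
    using sum_Suc_diff[of i "j-1" z] assms by (simp add: slope_def)
  moreover have "real (card {i..j-1}) = real j - real i" using assms by simp
  ultimately show ?thesis using assms by (simp add: sum_subtractf chord_slope_def)
qed

lemma chord_slope_strictly_between: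
  assumes "i < j" "x \<in> {i..j-1}" "slope z x \<noteq> chord_slope z i j"
  shows "(\<exists>p\<in>{i..j-1}. slope z p < chord_slope z i j) \<and>
         (\<exists>p\<in>{i..j-1}. chord_slope z i j < slope z p)"
  using exists_neg_pos_of_sum_eq_0[OF _ sum_slope_minus_chord_slope[OF assms(1)], of x] assms(2,3)
  by auto

lemma chord_slope_between:
  assumes "i < j"
  shows "(\<exists>p\<in>{i..j-1}. slope z p \<le> chord_slope z i j) \<and>
         (\<exists>p\<in>{i..j-1}. chord_slope z i j \<le> slope z p)"
proof (cases "\<forall>x\<in>{i..j-1}. slope z x = chord_slope z i j")
  case True
  moreover have "i \<in> {i..j-1}" using assms by simp
  ultimately show ?thesis by (metis order.refl)
next
  case False
  then obtain x where "x \<in> {i..j-1}" "slope z x \<noteq> chord_slope z i j" by blast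
  then show ?thesis using chord_slope_strictly_between[OF assms] by (meson less_imp_le)
qed

lemma slope_cost_le_window_cost:
  assumes "1 \<le> i" "i \<le> p" "p \<le> j"
  shows "\<bar>slope z p - slope z (i-1)\<bar> + \<bar>slope z j - slope z p\<bar> \<le> (\<Sum>k=i..j. \<bar>curv z k\<bar>)"
proof -
  have split: "sum f {i..j} = sum f {i..p} + sum f {p+1..j}" for f :: "nat \<Rightarrow> real"
    using sum.ub_add_nat[of i p f "j-p"] assms by simp
  have left: "(\<Sum>k=i..p. curv z k) = slope z p - slope z (i-1)"
    and right: "(\<Sum>k=p+1..j. curv z k) = slope z j - slope z p"
    using sum_curv_telescope[of i p z] sum_curv_telescope[of "p+1" j z] assms by simp_all
  have "\<bar>slope z p - slope z (i-1)\<bar> \<le> (\<Sum>k=i..p. \<bar>curv z k\<bar>)"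
    unfolding left[symmetric] by (rule sum_abs)
  moreover have "\<bar>slope z j - slope z p\<bar> \<le> (\<Sum>k=p+1..j. \<bar>curv z k\<bar>)"
    unfolding right[symmetric] by (rule sum_abs)
  ultimately show ?thesis using split by simp
qed

lemma window_cost_eq_chord_cost_if_flat:
  assumes "1 \<le> i" "i < j" "\<forall>k\<in>{i<..<j}. curv z k = 0"
  shows "(\<Sum>k=i..j. \<bar>curv z k\<bar>) = chord_cost z i j"
proof -
  have flat: "slope z p = slope z i" if "p \<in> {i..j-1}" for p
  proof -
    have "(\<Sum>k=i+1..p. curv z k) = 0" using assms that by (intro sum.neutral) auto
    then show ?thesis using sum_curv_telescope[of "i+1" p z] that by simp
  qed
  obtain p q where p: "p \<in> {i..j-1}" "slope z p \<le> chord_slope z i j"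
    and q: "q \<in> {i..j-1}" "chord_slope z i j \<le> slope z q"
    using chord_slope_between[OF assms(2), of z] by blast
  with flat[OF p(1)] flat[OF q(1)] have mean: "chord_slope z i j = slope z i" by linarith
  have "{i..j} = insert i (insert j {i<..<j})" using assms by auto
  then have "(\<Sum>k=i..j. \<bar>curv z k\<bar>) = \<bar>curv z i\<bar> + \<bar>curv z j\<bar>"
    using assms by simp
  also have "\<dots> = \<bar>slope z i - slope z (i-1)\<bar> + \<bar>slope z j - slope z i\<bar>"
    using flat[of "j-1"] assms by (simp add: curv_eq_slope_diff)
  finally show ?thesis by (simp add: chord_cost_def mean)
qed

lemma window_cost_eq_chord_cost_if_nonneg:
  assumes "1 \<le> i" "i < j" "\<forall>k\<in>{i..j}. 0 \<le> curv z k"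
  shows "(\<Sum>k=i..j. \<bar>curv z k\<bar>) = chord_cost z i j"
proof -
  have slopes: "slope z (i-1) \<le> slope z p \<and> slope z p \<le> slope z j" if "p \<in> {i..j-1}" for p
  proof -
    have p: "i \<le> p" "p \<le> j" using that by auto
    have "0 \<le> (\<Sum>k=i..p. curv z k)" "0 \<le> (\<Sum>k=p+1..j. curv z k)"
      using assms that by (auto intro!: sum_nonneg)
    moreover have "(\<Sum>k=i..p. curv z k) = slope z p - slope z (i-1)"
      "(\<Sum>k=p+1..j. curv z k) = slope z j - slope z p"
      using sum_curv_telescope[of i p z] sum_curv_telescope[of "p+1" j z] assms p by simp_all
    ultimately show ?thesis by simp
  qed
  obtain p q where "p \<in> {i..j-1}" "slope z p \<le> chord_slope z i j"
    "q \<in> {i..j-1}" "chord_slope z i j \<le> slope z q"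
    using chord_slope_between[OF assms(2), of z] by blast
  with slopes have "slope z (i-1) \<le> chord_slope z i j" "chord_slope z i j \<le> slope z j"
    by (meson order_trans)+
  moreover have "(\<Sum>k=i..j. \<bar>curv z k\<bar>) = (\<Sum>k=i..j. curv z k)"
    using assms(3) by (intro sum.cong) auto
  moreover have "(\<Sum>k=i..j. curv z k) = slope z j - slope z (i-1)"
    using sum_curv_telescope[of i j z] assms by simp
  ultimately show ?thesis by (simp add: chord_cost_def)
qed

lemma window_cost_eq_chord_cost:
  assumes "1 \<le> i" "i < j" "sign_consistent_on z i j"
  shows "(\<Sum>k=i..j. \<bar>curv z k\<bar>) = chord_cost z i j"
proof -
  consider "\<forall>k\<in>{i<..<j}. curv z k = 0" | "\<forall>k\<in>{i..j}. 0 \<le> curv z k"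
    | "\<forall>k\<in>{i..j}. curv z k \<le> 0"
    using assms(3) nonneg_products_imp_same_sign unfolding sign_consistent_on_def by blast
  then show ?thesis
  proof cases
    case 1
    then show ?thesis using window_cost_eq_chord_cost_if_flat assms by blast
  next
    case 2
    then show ?thesis using window_cost_eq_chord_cost_if_nonneg assms by blast
  next
    case 3
    then have "\<forall>k\<in>{i..j}. 0 \<le> curv (\<lambda>k. - z k) k" by (simp add: curv_uminus)
    from window_cost_eq_chord_cost_if_nonneg[OF assms(1,2) this]
    show ?thesis by (simp add: curv_uminus chord_cost_uminus)
  qed
qed

lemma chord_cost_less_window_cost:
  assumes "1 \<le> i" "\<not> sign_consistent_on z i j"
  shows "chord_cost z i j < (\<Sum>k=i..j. \<bar>curv z k\<bar>)"
proof -
  obtain k h q where kh: "k \<in> {i..j}" "h \<in> {i..j}" "curv z k * curv z h < 0"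
    and q: "q \<in> {i<..<j}" "curv z q \<noteq> 0"
    using assms(2) unfolding sign_consistent_on_def by (auto simp: not_le)
  define a b \<mu> where "a = slope z (i-1)" and "b = slope z j" and "\<mu> = chord_slope z i j"
  have "i < j" using q by simp
  (* Between a and b the chord cost is |b - a|, which the sign change beats; beyond them some
     inner slope lies strictly farther out than \<mu>. *)
  show ?thesis
  proof (cases "min a b \<le> \<mu> \<and> \<mu> \<le> max a b")
    case True
    then have "chord_cost z i j = \<bar>b - a\<bar>"
      unfolding chord_cost_def a_def[symmetric] b_def[symmetric] \<mu>_def[symmetric]
      by (auto simp: abs_if)
    moreover have "(\<Sum>k=i..j. curv z k) = b - a"
      using sum_curv_telescope[of i j z] assms \<open>i < j\<close> by (simp add: a_def b_def)
    moreover have "\<bar>sum (curv z) {i..j}\<bar> < (\<Sum>k=i..j. \<bar>curv z k\<bar>)"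
      using abs_sum_less_sum_abs[OF _ kh] by simp
    ultimately show ?thesis by simp
  next
    case False
    have "slope z q \<noteq> \<mu> \<or> slope z (q-1) \<noteq> \<mu>"
      using q curv_eq_slope_diff[of q z] assms(1) by auto
    moreover have "q \<in> {i..j-1}" "q-1 \<in> {i..j-1}" using q by auto
    ultimately obtain p1 p2
      where p: "p1 \<in> {i..j-1}" "slope z p1 < \<mu>" "p2 \<in> {i..j-1}" "\<mu> < slope z p2"
      using chord_slope_strictly_between[OF \<open>i < j\<close>] unfolding \<mu>_def by metis
    define cost where "cost x = \<bar>x - a\<bar> + \<bar>b - x\<bar>" for x
    have "cost (slope z p) \<le> (\<Sum>k=i..j. \<bar>curv z k\<bar>)" if "p \<in> {i..j-1}" for p
      using slope_cost_le_window_cost[of i p j z] assms(1) that by (auto simp: cost_def a_def b_def)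
    then have "cost (slope z p1) \<le> (\<Sum>k=i..j. \<bar>curv z k\<bar>)"
      "cost (slope z p2) \<le> (\<Sum>k=i..j. \<bar>curv z k\<bar>)"
      using p by blast+
    moreover have "cost \<mu> < cost (slope z p1) \<or> cost \<mu> < cost (slope z p2)"
      using False p by (auto simp: cost_def abs_if)
    moreover have "chord_cost z i j = cost \<mu>"
      by (simp add: chord_cost_def cost_def a_def b_def \<mu>_def)
    ultimately show ?thesis by linarith
  qed
qed

lemma chord_cost_le_window_cost:
  assumes "1 \<le> i" "i < j"
  shows "chord_cost z i j \<le> (\<Sum>k=i..j. \<bar>curv z k\<bar>)"
proof (cases "sign_consistent_on z i j")
  case True
  then show ?thesis using window_cost_eq_chord_cost[OF assms] by simp
next
  case False
  then show ?thesis using chord_cost_less_window_cost[OF assms(1) False] by simp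
qed

lemma chord_interp_affine:
  assumes "i < j" "i \<le> l" "l \<le> j"
  shows "chord_interp z i j l = z i + (real l - real i) * chord_slope z i j"
  using assms by (auto simp: chord_interp_def chord_slope_def)

lemma curv_chord_interp_inside:
  assumes "i < k" "k < j"
  shows "curv (chord_interp z i j) k = 0"
proof -
  have "real (k - 1) = real k - 1" using assms by (simp add: of_nat_diff)
  moreover have "chord_interp z i j (k-1) = z i + (real (k-1) - real i) * chord_slope z i j"
    "chord_interp z i j k = z i + (real k - real i) * chord_slope z i j"
    "chord_interp z i j (k+1) = z i + (real (k+1) - real i) * chord_slope z i j"
    using chord_interp_affine[of i j _ z] assms by auto
  ultimately show ?thesis by (simp add: curv_def algebra_simps)
qed

lemma curv_chord_interp_outside:
  assumes "k < i \<or> j < k"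
  shows "curv (chord_interp z i j) k = curv z k"
  using assms by (auto simp: curv_def chord_interp_def)

lemma window_cost_chord_interp:
  assumes "1 \<le> i" "i < j"
  shows "(\<Sum>k=i..j. \<bar>curv (chord_interp z i j) k\<bar>) = chord_cost z i j"
proof -
  have "sign_consistent_on (chord_interp z i j) i j"
    by (simp add: sign_consistent_on_def curv_chord_interp_inside)
  then have "(\<Sum>k=i..j. \<bar>curv (chord_interp z i j) k\<bar>) = chord_cost (chord_interp z i j) i j"
    using window_cost_eq_chord_cost assms by blast
  also have "\<dots> = chord_cost z i j"
    using assms by (intro chord_cost_cong) (auto simp: chord_interp_def)
  finally show ?thesis .
qed

section \<open>Long gaps between samples\<close>

definition long_gaps :: "nat set \<Rightarrow> (nat \<times> nat) set" where
  "long_gaps M = {(i, j). consecutive_samples M i j \<and> i + 2 \<le> j}"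

lemma twin_union_neighbour:
  assumes "twin_union n M" "m \<in> M"
  shows "m + 1 \<in> M \<or> (2 \<le> m \<and> m - 1 \<in> M)"
proof -
  obtain T where T: "T \<subseteq> {1..n-1}" "M = (\<Union>i\<in>T. {i, i+1})"
    using assms(1) unfolding twin_union_def by auto
  then obtain t where "t \<in> T" "m = t \<or> m = t + 1" using assms(2) by auto
  then show ?thesis using T by auto
qed

lemma long_gap_bounds:
  assumes "twin_union n M" "M \<subseteq> {1..n}" "(i, j) \<in> long_gaps M"
  shows "2 \<le> i" "i - 1 \<in> M" "j + 1 \<le> n" "j + 1 \<in> M"
proof -
  have gap: "i \<in> M" "j \<in> M" "i + 2 \<le> j" "\<forall>m\<in>M. \<not> (i < m \<and> m < j)"
    using assms(3) unfolding long_gaps_def consecutive_samples_def by auto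
  then have "i + 1 \<notin> M" "j - 1 \<notin> M" by auto
  then show "2 \<le> i" "i - 1 \<in> M" "j + 1 \<in> M"
    using twin_union_neighbour[OF assms(1)] gap(1,2) by fastforce+
  then show "j + 1 \<le> n" using assms(2) by auto
qed

lemma long_gaps_not_interleaved:
  assumes "twin_union n M" "(i, j) \<in> long_gaps M" "(i', j') \<in> long_gaps M" "i < i'"
    "k \<in> {i..j}" "k \<in> {i'..j'}"
  shows False
proof -
  have gap: "j \<in> M" "i + 2 \<le> j" "\<forall>m\<in>M. \<not> (i < m \<and> m < j)"
    and gap': "i' \<in> M" "i' + 2 \<le> j'" "\<forall>m\<in>M. \<not> (i' < m \<and> m < j')"
    using assms(2,3) unfolding long_gaps_def consecutive_samples_def by auto
  then have "k = j" "k = i'" using assms(4-6) by fastforce+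
  then have "k - 1 \<notin> M" "k + 1 \<notin> M" using gap gap' assms(6) by auto
  then show False using twin_union_neighbour[OF assms(1)] gap(1) \<open>k = j\<close> by blast
qed

lemma long_gaps_disjoint:
  assumes "twin_union n M" "(i, j) \<in> long_gaps M" "(i', j') \<in> long_gaps M"
    "k \<in> {i..j}" "k \<in> {i'..j'}"
  shows "i = i' \<and> j = j'"
proof -
  have "i = i'"
    using long_gaps_not_interleaved[OF assms(1,2,3) _ assms(4,5)]
      long_gaps_not_interleaved[OF assms(1,3,2) _ assms(5,4)] by fastforce
  moreover have "\<not> (i' < j \<and> j < j')" "\<not> (i < j' \<and> j' < j)" "i < j" "i' < j'"
    using assms(2,3) unfolding long_gaps_def consecutive_samples_def by auto
  ultimately show ?thesis by linarith
qed

lemma finite_long_gaps: "M \<subseteq> {1..n} \<Longrightarrow> finite (long_gaps M)"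
  by (rule finite_subset[of _ "{1..n} \<times> {1..n}"])
     (auto simp: long_gaps_def consecutive_samples_def)

lemma consecutive_samples_around:
  assumes "finite M" "a \<in> M" "a \<le> k" "b \<in> M" "k < b"
  obtains i j where "consecutive_samples M i j" "i \<le> k" "k < j"
proof -
  define i where "i = Max {m\<in>M. m \<le> k}"
  define j where "j = Min {m\<in>M. k < m}"
  have "i \<in> {m\<in>M. m \<le> k}" "j \<in> {m\<in>M. k < m}"
    unfolding i_def j_def using assms by (intro Max_in Min_in; auto)+
  moreover have "\<forall>m\<in>M. m \<le> k \<longrightarrow> m \<le> i" "\<forall>m\<in>M. k < m \<longrightarrow> j \<le> m"
    unfolding i_def j_def using assms(1) by simp_all
  ultimately have i: "i \<in> M" "i \<le> k" "\<forall>m\<in>M. m \<le> k \<longrightarrow> m \<le> i"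
    and j: "j \<in> M" "k < j" "\<forall>m\<in>M. k < m \<longrightarrow> j \<le> m" by auto
  have "consecutive_samples M i j"
    unfolding consecutive_samples_def using i j by (meson leD leI order.strict_trans1)
  with i j show ?thesis using that by blast
qed

lemma sampled_outside_long_gaps:
  assumes "twin_union n M" "M \<subseteq> {1..n}" "1 \<in> M" "n \<in> M"
    "k \<in> {2..n-1} - (\<Union>(i, j)\<in>long_gaps M. {i..j})"
  shows "k - 1 \<in> M" "k \<in> M" "k + 1 \<in> M"
proof -
  have fin: "finite M" using assms(2) finite_subset by blast
  have gap_at: "\<exists>i j. consecutive_samples M i j \<and> i \<le> m \<and> m < j" if "1 \<le> m" "m < n" for m
    using consecutive_samples_around[OF fin assms(3) that(1) assms(4) that(2)] by blast
  have k: "2 \<le> k" "k < n" using assms(5) by auto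
  have long: "k \<notin> {i..j}" if "consecutive_samples M i j" "i + 2 \<le> j" for i j
    using assms(5) that unfolding long_gaps_def by blast
  show "k \<in> M"
  proof (rule ccontr)
    assume "k \<notin> M"
    obtain i j where ij: "consecutive_samples M i j" "i \<le> k" "k < j"
      using gap_at[of k] k by auto
    with \<open>k \<notin> M\<close> have "i < k" unfolding consecutive_samples_def by (metis le_neq_implies_less)
    with ij show False using long by fastforce
  qed
  show "k + 1 \<in> M"
  proof (rule ccontr)
    assume "k + 1 \<notin> M"
    obtain i j where ij: "consecutive_samples M i j" "i \<le> k" "k < j"
      using gap_at[of k] k by auto
    then have "i = k" "j \<noteq> k + 1"
      using \<open>k \<in> M\<close> \<open>k + 1 \<notin> M\<close> unfolding consecutive_samples_def by force+
    with ij have "i + 2 \<le> j" "k \<in> {i..j}" by auto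
    with ij show False using long by blast
  qed
  show "k - 1 \<in> M"
  proof (rule ccontr)
    assume "k - 1 \<notin> M"
    have "1 \<le> k - 1" "k - 1 < n" using k by auto
    then obtain i j where ij: "consecutive_samples M i j" "i \<le> k - 1" "k - 1 < j"
      using gap_at by blast
    then have "i \<noteq> k - 1" "\<not> (i < k \<and> k < j)"
      using \<open>k \<in> M\<close> \<open>k - 1 \<notin> M\<close> unfolding consecutive_samples_def by auto
    with ij have "i + 2 \<le> j" "k \<in> {i..j}" using k by auto
    with ij show False using long by blast
  qed
qed

lemma sum_abs_curv_split_long_gaps:
  assumes "twin_union n M" "M \<subseteq> {1..n}"
  shows "(\<Sum>k=2..n-1. \<bar>curv w k\<bar>) =
           (\<Sum>k\<in>{2..n-1} - (\<Union>(i, j)\<in>long_gaps M. {i..j}). \<bar>curv w k\<bar>)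
         + (\<Sum>(i, j)\<in>long_gaps M. \<Sum>k=i..j. \<bar>curv w k\<bar>)"
proof -
  let ?W = "\<Union>(i, j)\<in>long_gaps M. {i..j}"
  have "?W \<subseteq> {2..n-1}"
    using long_gap_bounds[OF assms] by fastforce
  then have "(\<Sum>k=2..n-1. \<bar>curv w k\<bar>) = (\<Sum>k\<in>{2..n-1} - ?W. \<bar>curv w k\<bar>) + (\<Sum>k\<in>?W. \<bar>curv w k\<bar>)"
    by (simp add: sum.subset_diff)
  also have "(\<Sum>k\<in>?W. \<bar>curv w k\<bar>) = (\<Sum>(i, j)\<in>long_gaps M. \<Sum>k=i..j. \<bar>curv w k\<bar>)"
  proof (subst sum.UNION_disjoint)
    have "{i..j} \<inter> {i'..j'} = {}"
      if "(i, j) \<in> long_gaps M" "(i', j') \<in> long_gaps M" "(i, j) \<noteq> (i', j')" for i j i' j'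
      using long_gaps_disjoint[OF assms(1) that(1,2)] that(3) disjoint_iff by metis
    then show "\<forall>g\<in>long_gaps M. \<forall>g'\<in>long_gaps M. g \<noteq> g' \<longrightarrow>
        (case g of (i, j) \<Rightarrow> {i..j}) \<inter> (case g' of (i, j) \<Rightarrow> {i..j}) = {}"
      by (metis (no_types, lifting) case_prod_conv surj_pair)
  qed (auto simp: finite_long_gaps[OF assms(2)] case_prod_beta)
  finally show ?thesis .
qed

lemma sgn_curv_eq: "sgn_curv z k = sgn (curv z k)"
  by (simp add: sgn_curv_def curv_def)

lemma sgn_curv_agree_iff:
  "(sgn_curv z k \<noteq> 0 \<and> sgn_curv z h \<noteq> 0 \<longrightarrow> sgn_curv z k = sgn_curv z h) \<longleftrightarrow>
     0 \<le> curv z k * curv z h"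
  by (auto simp: sgn_curv_eq sgn_if zero_le_mult_iff)

lemma sign_consistent_iff_on_long_gaps:
  assumes "twin_union n M" "M \<subseteq> {1..n}"
  shows "sign_consistent n M z \<longleftrightarrow> (\<forall>(i, j)\<in>long_gaps M. sign_consistent_on z i j)"
proof -
  have "((\<forall>k h. i \<le> k \<and> k \<le> j \<and> i \<le> h \<and> h \<le> j \<and>
                 2 \<le> k \<and> k \<le> n-1 \<and> 2 \<le> h \<and> h \<le> n-1 \<and>
                 sgn_curv z k \<noteq> 0 \<and> sgn_curv z h \<noteq> 0 \<longrightarrow> sgn_curv z k = sgn_curv z h)
         \<or> (\<forall>k. i < k \<and> k < j \<longrightarrow> sgn_curv z k = 0))
        \<longleftrightarrow> ((i, j) \<in> long_gaps M \<longrightarrow> sign_consistent_on z i j)"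
    if "consecutive_samples M i j" for i j
  proof (cases "(i, j) \<in> long_gaps M")
    case True
    then have "2 \<le> i" "j \<le> n - 1" using long_gap_bounds[OF assms True] by auto
    then have "(\<forall>k h. i \<le> k \<and> k \<le> j \<and> i \<le> h \<and> h \<le> j \<and>
                 2 \<le> k \<and> k \<le> n-1 \<and> 2 \<le> h \<and> h \<le> n-1 \<and>
                 sgn_curv z k \<noteq> 0 \<and> sgn_curv z h \<noteq> 0 \<longrightarrow> sgn_curv z k = sgn_curv z h)
        \<longleftrightarrow> (\<forall>k\<in>{i..j}. \<forall>h\<in>{i..j}. 0 \<le> curv z k * curv z h)"
      by (simp flip: sgn_curv_agree_iff) (smt (verit) atLeastAtMost_iff le_trans)
    then show ?thesis
      using True by (simp add: sign_consistent_on_def sgn_curv_eq sgn_eq_0_iff Ball_def)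
  next
    case False
    then have "j < i + 2" using that unfolding long_gaps_def by auto
    then show ?thesis using False by auto
  qed
  then show ?thesis
    unfolding sign_consistent_def using long_gaps_def by auto
qed

section \<open>Optimality\<close>

lemma is_optimal_imp_sign_consistent:
  assumes "twin_union n M" "M \<subseteq> {1..n}" "is_optimal n M y z"
  shows "sign_consistent n M z"
proof (rule ccontr)
  assume "\<not> sign_consistent n M z"
  then obtain i j where gap: "(i, j) \<in> long_gaps M" and bad: "\<not> sign_consistent_on z i j"
    using sign_consistent_iff_on_long_gaps[OF assms(1,2)] by auto
  have ij: "2 \<le> i" "i < j" "j + 1 \<le> n" "\<forall>m\<in>M. \<not> (i < m \<and> m < j)"
    using long_gap_bounds[OF assms(1,2) gap] gap unfolding long_gaps_def consecutive_samples_def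
    by auto
  define z' where "z' = chord_interp z i j"
  have "sample_eq M z' y"
    using assms(3) ij(4) unfolding is_optimal_def sample_eq_def z'_def chord_interp_def by auto
  then have le: "l1_D n z \<le> l1_D n z'" using assms(3) unfolding is_optimal_def by blast
  have sub: "{i..j} \<subseteq> {2..n-1}" using ij by auto
  have outside: "(\<Sum>k\<in>{2..n-1} - {i..j}. \<bar>curv z' k\<bar>) = (\<Sum>k\<in>{2..n-1} - {i..j}. \<bar>curv z k\<bar>)"
    unfolding z'_def by (intro sum.cong) (auto simp: curv_chord_interp_outside)
  have "(\<Sum>k=i..j. \<bar>curv z' k\<bar>) < (\<Sum>k=i..j. \<bar>curv z k\<bar>)"
    using window_cost_chord_interp[of i j z] chord_cost_less_window_cost[OF _ bad] ij
    unfolding z'_def by simp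
  then have "l1_D n z' < l1_D n z"
    unfolding l1_D_eq_sum_curv sum.subset_diff[OF sub finite_atLeastAtMost] outside by simp
  with le show False by simp
qed

lemma sign_consistent_imp_is_optimal:
  assumes "twin_union n M" "M \<subseteq> {1..n}" "1 \<in> M" "n \<in> M" "sample_eq M z y"
    "sign_consistent n M z"
  shows "is_optimal n M y z"
  unfolding is_optimal_def
proof (intro conjI allI impI)
  show "sample_eq M z y" by fact
  fix z' assume "sample_eq M z' y"
  then have agree: "z' m = z m" if "m \<in> M" for m
    using assms(5) that unfolding sample_eq_def by simp
  let ?F = "{2..n-1} - (\<Union>(i, j)\<in>long_gaps M. {i..j})"
  have "(\<Sum>k\<in>?F. \<bar>curv z k\<bar>) = (\<Sum>k\<in>?F. \<bar>curv z' k\<bar>)"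
  proof (intro sum.cong refl)
    fix k assume "k \<in> ?F"
    then have "k - 1 \<in> M" "k \<in> M" "k + 1 \<in> M"
      using sampled_outside_long_gaps[OF assms(1-4)] by auto
    then show "\<bar>curv z k\<bar> = \<bar>curv z' k\<bar>" by (simp add: curv_def agree)
  qed
  moreover have "(\<Sum>k=i..j. \<bar>curv z k\<bar>) \<le> (\<Sum>k=i..j. \<bar>curv z' k\<bar>)"
    if gap: "(i, j) \<in> long_gaps M" for i j
  proof -
    have "2 \<le> i" "i < j" "i - 1 \<in> M" "i \<in> M" "j \<in> M" "j + 1 \<in> M"
      using long_gap_bounds[OF assms(1,2) gap] gap
      unfolding long_gaps_def consecutive_samples_def by auto
    moreover have "sign_consistent_on z i j"
      using assms(6) gap sign_consistent_iff_on_long_gaps[OF assms(1,2)] by auto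
    ultimately have "(\<Sum>k=i..j. \<bar>curv z k\<bar>) = chord_cost z' i j"
      using window_cost_eq_chord_cost[of i j z] chord_cost_cong[of i z z' j] agree by simp
    also have "\<dots> \<le> (\<Sum>k=i..j. \<bar>curv z' k\<bar>)"
      using chord_cost_le_window_cost \<open>2 \<le> i\<close> \<open>i < j\<close> by simp
    finally show ?thesis .
  qed
  then have "(\<Sum>(i, j)\<in>long_gaps M. \<Sum>k=i..j. \<bar>curv z k\<bar>)
      \<le> (\<Sum>(i, j)\<in>long_gaps M. \<Sum>k=i..j. \<bar>curv z' k\<bar>)"
    by (intro sum_mono) auto
  ultimately show "l1_D n z \<le> l1_D n z'"
    unfolding l1_D_eq_sum_curv sum_abs_curv_split_long_gaps[OF assms(1,2)] by simp
qed

theorem theorem1: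
  fixes n :: nat and M :: "nat set" and y z :: "nat \<Rightarrow> real"
  assumes "n \<ge> 3"
    and "M \<subseteq> {1..n}"
    and "twin_union n M"
    and "1 \<in> M" and "n \<in> M"
    and "sample_eq M z y"
  shows "is_optimal n M y z \<longleftrightarrow> sign_consistent n M z"
  using is_optimal_imp_sign_consistent[OF assms(3,2)]
    sign_consistent_imp_is_optimal[OF assms(3,2,4,5,6)] by blast

end
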